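(* Let $\Delta\subset\mathbb{S}^2$ be a planar flag complex satisfying the Standing Assumptions, and let $T$ be a finite tree encoding the structure of $\Delta$ in the following sense: (1) each vertex $v$ of $T$ is associated to a prime full subcomplex $\Delta_v$ of $\Delta$, with $\Delta_v\neq\Delta_{v'}$ for $v\neq v'$ and $\bigcup_{v}\Delta_v=\Delta$; (2) each edge $e$ of $T$ is associated to an induced 4-cycle $\Delta_e$ of $\Delta$, with $\Delta_e\neq\Delta_{e'}$ for $e\neq e'$; (3) vertices $v_1,v_2$ are the endpoints of an edge $e$ iff $\Delta_{v_1}\cap\Delta_{v_2}=\Delta_e$, and if $V_1,V_2$ are the vertex sets of the two components of $T$ minus the midpoint of $e$, then $(\bigcup_{v\in V_1}\Delta_v,\bigcup_{v\in V_2}\Delta_v)$ is a strong visual decomposition of $\Delta$ along $\Delta_e$. Then for each region $R$ of $\mathbb{S}^2-\Delta$ there is a vertex $v$ of $T$ such that $R$ is also a region of $\mathbb{S}^2-\Delta_v$.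
   Context: A flag complex is a simplicial complex in which every complete subgraph of the 1-skeleton spans a simplex; a subcomplex is full if it contains every simplex whose vertices lie in it. Standing Assumptions on $\Delta\subset\mathbb{S}^2$: (1) connected, no separating vertex, no separating edge, contains an induced 4-cycle; (2) not a 4-cycle and not a cone on a 4-cycle. An induced 4-cycle $\sigma$ strongly separates $\Delta$ if $\Delta$ meets both components $U_1,U_2$ of $\mathbb{S}^2-\sigma$; then with $\Delta_i$ equal to $\sigma$ together with the components of $\Delta-\sigma$ in $U_i$, the pair $(\Delta_1,\Delta_2)$ is the strong visual decomposition along $\sigma$. $\Delta$ is prime if it is connected with no separating vertex or edge, is not a 4-cycle but contains an induced 4-cycle, and has no strongly separating induced 4-cycle. A region of $\mathbb{S}^2-\Delta$ is a connected component. *)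

theory Defs
  imports "HOL-Analysis.Analysis"
begin

definition simplicial_complex :: "'v set set \<Rightarrow> bool" where
  "simplicial_complex K \<longleftrightarrow>
     (\<forall>s\<in>K. finite s \<and> s \<noteq> {}) \<and> (\<forall>s\<in>K. \<forall>t. t \<subseteq> s \<and> t \<noteq> {} \<longrightarrow> t \<in> K)"

definition verts :: "'v set set \<Rightarrow> 'v set" where
  "verts K = \<Union>K"

definition flag :: "'v set set \<Rightarrow> bool" where
  "flag K \<longleftrightarrow> (\<forall>S. finite S \<and> S \<noteq> {} \<and> S \<subseteq> verts K \<and>
       (\<forall>u\<in>S. \<forall>w\<in>S. u \<noteq> w \<longrightarrow> {u, w} \<in> K) \<longrightarrow> S \<in> K)"

definition induced :: "'v set set \<Rightarrow> 'v set \<Rightarrow> 'v set set" where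
  "induced K W = {s\<in>K. s \<subseteq> W}"

definition full_subcomplex :: "'v set set \<Rightarrow> 'v set set \<Rightarrow> bool" where
  "full_subcomplex K L \<longleftrightarrow> L \<subseteq> K \<and> L = induced K (verts L)"

definition is_4cycle :: "'v set set \<Rightarrow> bool" where
  "is_4cycle L \<longleftrightarrow> (\<exists>a b c d. distinct [a, b, c, d] \<and>
      L = {{a}, {b}, {c}, {d}, {a, b}, {b, c}, {c, d}, {d, a}})"

definition induced_4cycle :: "'v set set \<Rightarrow> 'v set set \<Rightarrow> bool" where
  "induced_4cycle K L \<longleftrightarrow> full_subcomplex K L \<and> is_4cycle L"

definition cone_on_4cycle :: "'v set set \<Rightarrow> bool" where
  "cone_on_4cycle K \<longleftrightarrow> (\<exists>c C. is_4cycle C \<and> c \<notin> verts C \<and>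
      K = C \<union> {insert c s | s. s \<in> C} \<union> {{c}})"

definition realization :: "('v::finite) set set \<Rightarrow> (real^'v) set" where
  "realization K = (\<Union>s\<in>K. convex hull ((\<lambda>i. axis i 1) ` s))"

definition complex_connected :: "('v::finite) set set \<Rightarrow> bool" where
  "complex_connected K \<longleftrightarrow> connected (realization K)"

definition has_separating_vertex :: "('v::finite) set set \<Rightarrow> bool" where
  "has_separating_vertex K \<longleftrightarrow>
     (\<exists>v\<in>verts K. \<not> complex_connected (induced K (verts K - {v})))"

definition has_separating_edge :: "('v::finite) set set \<Rightarrow> bool" where
  "has_separating_edge K \<longleftrightarrow>
     (\<exists>e\<in>K. card e = 2 \<and> \<not> complex_connected (induced K (verts K - e)))"

abbreviation S2 :: "(real^3) set" where
  "S2 \<equiv> sphere 0 1"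

definition planar_embedding :: "((real^'v) \<Rightarrow> real^3) \<Rightarrow> ('v::finite) set set \<Rightarrow> bool" where
  "planar_embedding h K \<longleftrightarrow> continuous_on (realization K) h \<and> inj_on h (realization K)
     \<and> h ` realization K \<subseteq> S2"

abbreviation img :: "((real^'v) \<Rightarrow> real^3) \<Rightarrow> ('v::finite) set set \<Rightarrow> (real^3) set" where
  "img h K \<equiv> h ` realization K"

definition strongly_separates ::
  "((real^'v) \<Rightarrow> real^3) \<Rightarrow> ('v::finite) set set \<Rightarrow> 'v set set \<Rightarrow> bool" where
  "strongly_separates h K \<sigma> \<longleftrightarrow> induced_4cycle K \<sigma> \<and>
     (\<exists>U1 U2. components (S2 - img h \<sigma>) = {U1, U2} \<and> U1 \<noteq> U2 \<and>
        img h K \<inter> U1 \<noteq> {} \<and> img h K \<inter> U2 \<noteq> {})"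

definition strong_visual_decomposition ::
  "((real^'v) \<Rightarrow> real^3) \<Rightarrow> ('v::finite) set set \<Rightarrow> 'v set set \<Rightarrow> 'v set set \<Rightarrow> 'v set set \<Rightarrow> bool" where
  "strong_visual_decomposition h K \<sigma> A B \<longleftrightarrow> induced_4cycle K \<sigma> \<and>
     (\<exists>U1 U2. components (S2 - img h \<sigma>) = {U1, U2} \<and> U1 \<noteq> U2 \<and>
        img h K \<inter> U1 \<noteq> {} \<and> img h K \<inter> U2 \<noteq> {} \<and>
        img h A = img h \<sigma> \<union> \<Union>{C \<in> components (img h K - img h \<sigma>). C \<subseteq> U1} \<and>
        img h B = img h \<sigma> \<union> \<Union>{C \<in> components (img h K - img h \<sigma>). C \<subseteq> U2})"

definition prime_complex :: "((real^'v) \<Rightarrow> real^3) \<Rightarrow> ('v::finite) set set \<Rightarrow> bool" where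
  "prime_complex h K \<longleftrightarrow> complex_connected K \<and> \<not> has_separating_vertex K \<and>
     \<not> has_separating_edge K \<and> \<not> is_4cycle K \<and> (\<exists>\<sigma>. induced_4cycle K \<sigma>) \<and>
     \<not> (\<exists>\<sigma>. strongly_separates h K \<sigma>)"

definition standing_assumptions :: "('v::finite) set set \<Rightarrow> bool" where
  "standing_assumptions K \<longleftrightarrow> complex_connected K \<and> \<not> has_separating_vertex K \<and>
     \<not> has_separating_edge K \<and> (\<exists>\<sigma>. induced_4cycle K \<sigma>) \<and>
     \<not> is_4cycle K \<and> \<not> cone_on_4cycle K"

definition gadj :: "'t set set \<Rightarrow> 't \<Rightarrow> 't \<Rightarrow> bool" where
  "gadj E u w \<longleftrightarrow> u \<noteq> w \<and> {u, w} \<in> E"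

definition reach :: "'t set set \<Rightarrow> 't \<Rightarrow> 't \<Rightarrow> bool" where
  "reach E = (gadj E)\<^sup>*\<^sup>*"

definition finite_tree :: "'t set \<Rightarrow> 't set set \<Rightarrow> bool" where
  "finite_tree V E \<longleftrightarrow> finite V \<and> V \<noteq> {} \<and>
     (\<forall>e\<in>E. \<exists>u w. e = {u, w} \<and> u \<noteq> w \<and> u \<in> V \<and> w \<in> V) \<and>
     (\<forall>u\<in>V. \<forall>w\<in>V. reach E u w) \<and>
     (\<forall>e\<in>E. \<forall>u w. e = {u, w} \<longrightarrow> \<not> reach (E - {e}) u w)"

definition side :: "'t set \<Rightarrow> 't set set \<Rightarrow> 't set \<Rightarrow> 't \<Rightarrow> 't set" where
  "side V E e u = {w\<in>V. reach (E - {e}) u w}"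

end

theory Submission
  imports Defs
begin

(* Every edge e of T separates the region R from the half of \<Delta> on one side of e;
   orient e away from that side. An orientation of a finite tree has a vertex v at which all
   incident edges point inwards. No simplex of \<Delta> outside \<Delta>_v can then reach the region of
   the sphere minus \<Delta>_v containing R: it lies beyond some edge at v, hence on the far side
   of the corresponding 4-cycle. So that region is R itself. *)

lemma img_mono: "K \<subseteq> L \<Longrightarrow> img h K \<subseteq> img h L"
  by (auto simp: realization_def)

lemma img_UN: "img h (\<Union>i\<in>I. F i) = (\<Union>i\<in>I. img h (F i))"
  by (auto simp: realization_def)

lemma induced_4cycle_subcomplex: "induced_4cycle K L \<Longrightarrow> L \<subseteq> K"
  unfolding induced_4cycle_def full_subcomplex_def by (elim conjE)

lemma reach_gadj_iff: "gadj E v b \<Longrightarrow> reach E a v \<longleftrightarrow> reach E a b"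
  unfolding reach_def gadj_def
  by (metis (mono_tags, lifting) insert_commute rtranclp.rtrancl_into_rtrancl)

lemma reach_first_step:
  assumes "reach E v w"
  shows "w = v \<or> (\<exists>b. gadj E v b \<and> reach (E - {{v,b}}) b w)"
  using assms unfolding reach_def
proof (induction rule: rtranclp_induct)
  case base show ?case by simp
next
  case (step w w')
  from step.IH show ?case
  proof
    assume "w = v" with step.hyps(2) show ?thesis by auto
  next
    assume "\<exists>b. gadj E v b \<and> (gadj (E - {{v,b}}))\<^sup>*\<^sup>* b w"
    then obtain b where b: "gadj E v b" "(gadj (E - {{v,b}}))\<^sup>*\<^sup>* b w" by blast
    show ?thesis
    proof (cases "{w,w'} = {v,b}")
      case True
      then have "(w = v \<and> w' = b) \<or> (w = b \<and> w' = v)" by (auto simp: doubleton_eq_iff)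
      then show ?thesis using b by auto
    next
      case False
      then have "gadj (E - {{v,b}}) w w'" using step.hyps(2) by (auto simp: gadj_def)
      then show ?thesis using b by (meson rtranclp.rtrancl_into_rtrancl)
    qed
  qed
qed

lemma finite_tree_edges:
  assumes "finite_tree V E"
  shows "finite E" and "{a,b} \<in> E \<Longrightarrow> a \<noteq> b \<and> a \<in> V \<and> b \<in> V"
    and "{a,b} \<in> E \<Longrightarrow> \<not> reach (E - {{a,b}}) a b"
proof -
  have edges: "\<forall>e\<in>E. \<exists>u w. e = {u, w} \<and> u \<noteq> w \<and> u \<in> V \<and> w \<in> V"
    using assms unfolding finite_tree_def by (elim conjE)
  have bridges: "\<forall>e\<in>E. \<forall>u w. e = {u, w} \<longrightarrow> \<not> reach (E - {e}) u w"
    using assms unfolding finite_tree_def by (elim conjE)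
  have "finite V"
    using assms unfolding finite_tree_def by (elim conjE)
  have "E \<subseteq> Pow V" using edges by fastforce
  with \<open>finite V\<close> show "finite E" by (metis finite_Pow_iff finite_subset)
  show "{a,b} \<in> E \<Longrightarrow> a \<noteq> b \<and> a \<in> V \<and> b \<in> V"
  proof -
    assume "{a,b} \<in> E"
    then obtain u w where "{a,b} = {u,w}" "u \<noteq> w" "u \<in> V" "w \<in> V" using edges by blast
    then show ?thesis by (auto simp: doubleton_eq_iff)
  qed
  show "{a,b} \<in> E \<Longrightarrow> \<not> reach (E - {{a,b}}) a b"
    using bridges by simp
qed

lemma finite_tree_side_of_neighbour:
  assumes "finite_tree V E" "v \<in> V" "w \<in> V" "w \<noteq> v"
  obtains b where "{v,b} \<in> E" "w \<in> side V E {v,b} b"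
proof -
  have "\<forall>u\<in>V. \<forall>w\<in>V. reach E u w" using assms(1) unfolding finite_tree_def by (elim conjE)
  with assms(2,3) have "reach E v w" by blast
  from reach_first_step[OF this] \<open>w \<noteq> v\<close>
  obtain b where "gadj E v b" "reach (E - {{v,b}}) b w" by blast
  then have "{v,b} \<in> E" "w \<in> side V E {v,b} b" using \<open>w \<in> V\<close> by (simp_all add: gadj_def side_def)
  then show thesis by (rule that)
qed

text \<open>The vertex v is found by minimising the number of edges that do not point towards v:
  moving from v across an edge pointing away from v decreases this number by one.\<close>

lemma finite_tree_orientation_has_sink:
  assumes tree: "finite_tree V E"
    and oriented: "\<And>e a b. e \<in> E \<Longrightarrow> e = {a,b} \<Longrightarrow> away e a \<or> away e b"
  obtains v where "v \<in> V" "\<And>b. {v,b} \<in> E \<Longrightarrow> away {v,b} b"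
proof -
  define towards where "towards e u \<longleftrightarrow> (\<exists>a b. e = {a,b} \<and> away e b \<and> reach (E - {e}) a u)"
    for e u
  define misses where "misses u = card {e\<in>E. \<not> towards e u}" for u
  have "V \<noteq> {}" using tree unfolding finite_tree_def by (elim conjE)
  then obtain v where v: "v \<in> V" "\<And>u. u \<in> V \<Longrightarrow> misses v \<le> misses u"
    using ex_has_least_nat[of "\<lambda>u. u \<in> V" _ misses] by blast
  have "away {v,b} b" if vb: "{v,b} \<in> E" for b
  proof (rule ccontr)
    assume not_away: "\<not> away {v,b} b"
    then have away_v: "away {v,b} v" using oriented[OF vb refl] by blast
    have "v \<noteq> b" "b \<in> V" using finite_tree_edges(2)[OF tree vb] by auto
    have "\<not> reach (E - {{v,b}}) b v"
      using finite_tree_edges(3)[OF tree] vb by (metis insert_commute)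
    with not_away \<open>v \<noteq> b\<close> have not_towards_v: "\<not> towards {v,b} v"
      unfolding towards_def by (metis doubleton_eq_iff)
    have towards_b: "towards {v,b} b"
      unfolding towards_def reach_def using away_v by (metis insert_commute rtranclp.rtrancl_refl)
    have same: "towards e v \<longleftrightarrow> towards e b" if "e \<noteq> {v,b}" for e
    proof -
      have "gadj (E - {e}) v b" using that vb \<open>v \<noteq> b\<close> by (auto simp: gadj_def)
      then have "reach (E - {e}) a v \<longleftrightarrow> reach (E - {e}) a b" for a by (rule reach_gadj_iff)
      then show ?thesis unfolding towards_def by simp
    qed
    have "{e\<in>E. \<not> towards e b} \<subseteq> {e\<in>E. \<not> towards e v} - {{v,b}}"
    proof
      fix e assume e: "e \<in> {e\<in>E. \<not> towards e b}"
      then have "e \<noteq> {v,b}" using towards_b by blast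
      with e show "e \<in> {e\<in>E. \<not> towards e v} - {{v,b}}" using same by blast
    qed
    moreover have "finite {e\<in>E. \<not> towards e v}" using finite_tree_edges(1)[OF tree] by simp
    ultimately have "misses b \<le> card ({e\<in>E. \<not> towards e v} - {{v,b}})"
      unfolding misses_def by (intro card_mono) auto
    also have "\<dots> < misses v"
      unfolding misses_def using \<open>finite {e\<in>E. \<not> towards e v}\<close> not_towards_v vb
      by (intro card_Diff1_less) auto
    finally show False using v(2)[OF \<open>b \<in> V\<close>] by simp
  qed
  then show thesis using that v(1) by blast
qed

lemma components_refine:
  assumes "R \<in> components (S - X)" "Y \<subseteq> X"
  obtains C where "C \<in> components (S - Y)" "R \<subseteq> C"
proof -
  obtain x where x: "x \<in> R" using in_components_nonempty[OF assms(1)] by blast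
  then have "x \<in> S - Y" using in_components_subset[OF assms(1)] assms(2) by blast
  then have "connected_component_set (S - Y) x \<in> components (S - Y)" by (rule componentsI)
  moreover have "R \<subseteq> connected_component_set (S - Y) x"
    using connected_component_maximal[OF x in_components_connected[OF assms(1)]]
      in_components_subset[OF assms(1)] assms(2) by blast
  ultimately show thesis by (rule that)
qed

lemma components_refine_eq:
  assumes "R \<in> components (S - X)" "C \<in> components (S - Y)" "Y \<subseteq> X" "R \<subseteq> C" "C \<inter> X = {}"
  shows "C = R"
proof -
  have "C \<subseteq> S - X" using in_components_subset[OF assms(2)] assms(5) by blast
  with assms(2) have "C \<in> components (S - X)"
    using assms(3) by (blast intro: components_intermediate_subset)
  then show ?thesis
    using components_eq[OF _ assms(1)] assms(4) in_components_nonempty[OF assms(1)] by blast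
qed

definition separates :: "(real^3) set \<Rightarrow> (real^3) set \<Rightarrow> (real^3) set \<Rightarrow> bool" where
  "separates S X R \<longleftrightarrow> (\<exists>U\<in>components (S2 - S). X \<subseteq> S \<union> U \<and> R \<inter> U = {})"

lemma separates_connected_disjoint:
  assumes "separates S X R" "connected C" "C \<subseteq> S2 - S" "C \<inter> R \<noteq> {}"
  shows "C \<inter> X = {}"
proof -
  obtain U where U: "U \<in> components (S2 - S)" "X \<subseteq> S \<union> U" "R \<inter> U = {}"
    using assms(1) unfolding separates_def by blast
  obtain x where x: "x \<in> C" "x \<in> R" using assms(4) by blast
  define W where "W = connected_component_set (S2 - S) x"
  have "W \<in> components (S2 - S)" unfolding W_def using x assms(3) by (blast intro: componentsI)
  moreover have "x \<in> W" "x \<notin> U" unfolding W_def using x assms(3) U(3) by auto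
  ultimately have "W \<inter> U = {}" using U(1) components_nonoverlap by blast
  moreover have "C \<subseteq> W" unfolding W_def using connected_component_maximal x(1) assms(2,3) .
  ultimately show ?thesis using U(2) assms(3) by blast
qed

lemma strong_visual_decomposition_sides:
  assumes "strong_visual_decomposition h K \<sigma> A B"
  obtains U1 U2 where "components (S2 - img h \<sigma>) = {U1, U2}" "U1 \<noteq> U2"
    "img h A \<subseteq> img h \<sigma> \<union> U1" "img h B \<subseteq> img h \<sigma> \<union> U2"
proof -
  from assms obtain U1 U2 where U: "components (S2 - img h \<sigma>) = {U1, U2}" "U1 \<noteq> U2"
      "img h A = img h \<sigma> \<union> \<Union>{C \<in> components (img h K - img h \<sigma>). C \<subseteq> U1}"
      "img h B = img h \<sigma> \<union> \<Union>{C \<in> components (img h K - img h \<sigma>). C \<subseteq> U2}"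
    unfolding strong_visual_decomposition_def by meson
  show thesis by (rule that[OF U(1,2)]) (use U(3,4) in blast)+
qed

lemma strong_visual_decomposition_separates:
  assumes "strong_visual_decomposition h K \<sigma> A B"
    and "connected R" "R \<noteq> {}" "R \<subseteq> S2 - img h \<sigma>"
  shows "separates (img h \<sigma>) (img h A) R \<or> separates (img h \<sigma>) (img h B) R"
proof -
  obtain U1 U2 where U: "components (S2 - img h \<sigma>) = {U1, U2}" "U1 \<noteq> U2"
      "img h A \<subseteq> img h \<sigma> \<union> U1" "img h B \<subseteq> img h \<sigma> \<union> U2"
    using assms(1) by (rule strong_visual_decomposition_sides)
  obtain x where x: "x \<in> R" using assms(3) by blast
  then have "x \<in> S2 - img h \<sigma>" using assms(4) by blast
  from componentsI[OF this] have "connected_component_set (S2 - img h \<sigma>) x \<in> {U1, U2}"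
    by (simp only: U(1))
  moreover have "R \<subseteq> connected_component_set (S2 - img h \<sigma>) x"
    using connected_component_maximal x assms(2,4) .
  ultimately have "R \<subseteq> U1 \<or> R \<subseteq> U2" by auto
  moreover have "U1 \<inter> U2 = {}"
    using components_nonoverlap[of U1 "S2 - img h \<sigma>" U2] U(1,2) by simp
  ultimately have "R \<inter> U2 = {} \<or> R \<inter> U1 = {}" by blast
  then show ?thesis unfolding separates_def using U by auto
qed

theorem lemma4p15:
  fixes K :: "('v::finite) set set"
    and h :: "real^'v \<Rightarrow> real^3"
    and VT :: "'t set" and ET :: "'t set set"
    and \<Delta>v :: "'t \<Rightarrow> 'v set set" and \<Delta>e :: "'t set \<Rightarrow> 'v set set"
  assumes cx: "simplicial_complex K" and fl: "flag K"
    and emb: "planar_embedding h K"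
    and sa: "standing_assumptions K"
    and tree: "finite_tree VT ET"
    and vert_prime: "\<forall>v\<in>VT. full_subcomplex K (\<Delta>v v) \<and> prime_complex h (\<Delta>v v)"
    and vert_inj: "inj_on \<Delta>v VT"
    and vert_cover: "(\<Union>v\<in>VT. \<Delta>v v) = K"
    and edge_cyc: "\<forall>e\<in>ET. induced_4cycle K (\<Delta>e e)"
    and edge_inj: "inj_on \<Delta>e ET"
    and endpoints: "\<forall>v1\<in>VT. \<forall>v2\<in>VT. \<forall>e\<in>ET. e = {v1, v2} \<longleftrightarrow> \<Delta>v v1 \<inter> \<Delta>v v2 = \<Delta>e e"
    and decomp: "\<forall>e\<in>ET. \<forall>v1 v2. e = {v1, v2} \<longrightarrow>
         strong_visual_decomposition h K (\<Delta>e e)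
           (\<Union>v\<in>side VT ET e v1. \<Delta>v v) (\<Union>v\<in>side VT ET e v2. \<Delta>v v)"
  shows "\<forall>R\<in>components (S2 - img h K). \<exists>v\<in>VT. R \<in> components (S2 - img h (\<Delta>v v))"
proof
  fix R assume R: "R \<in> components (S2 - img h K)"
  have img_K: "img h K = (\<Union>w\<in>VT. img h (\<Delta>v w))"
    using img_UN[of h \<Delta>v VT] vert_cover by simp
  define away where "away e b \<longleftrightarrow>
      separates (img h (\<Delta>e e)) (img h (\<Union>w\<in>side VT ET e b. \<Delta>v w)) R" for e b
  have "away e a \<or> away e b" if "e \<in> ET" "e = {a,b}" for e a b
  proof -
    have "\<Delta>e e \<subseteq> K" using edge_cyc \<open>e \<in> ET\<close> induced_4cycle_subcomplex by blast
    then have "R \<subseteq> S2 - img h (\<Delta>e e)"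
      using in_components_subset[OF R] img_mono[of "\<Delta>e e" K h] by blast
    then show ?thesis unfolding away_def
      using strong_visual_decomposition_separates[OF decomp[rule_format, OF that]]
        in_components_connected[OF R] in_components_nonempty[OF R] by blast
  qed
  then obtain v where v: "v \<in> VT" "\<And>b. {v,b} \<in> ET \<Longrightarrow> away {v,b} b"
    using finite_tree_orientation_has_sink[OF tree] by metis
  have "img h (\<Delta>v v) \<subseteq> img h K" using img_K v(1) by blast
  with R obtain C where C: "C \<in> components (S2 - img h (\<Delta>v v))" "R \<subseteq> C"
    by (rule components_refine)
  have "C \<inter> img h (\<Delta>v w) = {}" if "w \<in> VT" for w
  proof (cases "w = v")
    case False
    with tree v(1) that obtain b where b: "{v,b} \<in> ET" "w \<in> side VT ET {v,b} b"
      by (rule finite_tree_side_of_neighbour)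
    have "b \<in> VT" using finite_tree_edges(2)[OF tree b(1)] by simp
    have "\<Delta>v v \<inter> \<Delta>v b = \<Delta>e {v,b}" using endpoints[rule_format, OF v(1) \<open>b \<in> VT\<close> b(1)] by simp
    then have C_off_cycle: "C \<subseteq> S2 - img h (\<Delta>e {v,b})"
      using in_components_subset[OF C(1)] img_mono[of "\<Delta>e {v,b}" "\<Delta>v v" h] by blast
    have "C \<inter> R \<noteq> {}" using C(2) in_components_nonempty[OF R] by blast
    with v(2)[OF b(1), unfolded away_def] in_components_connected[OF C(1)] C_off_cycle
    have "C \<inter> img h (\<Union>u\<in>side VT ET {v,b} b. \<Delta>v u) = {}"
      by (rule separates_connected_disjoint)
    moreover have "img h (\<Delta>v w) \<subseteq> img h (\<Union>u\<in>side VT ET {v,b} b. \<Delta>v u)"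
      by (rule img_mono) (use b(2) in blast)
    ultimately show ?thesis by blast
  qed (use in_components_subset[OF C(1)] in blast)
  then have "C \<inter> img h K = {}" unfolding img_K by (simp add: Int_UN_distrib)
  with R C(1) \<open>img h (\<Delta>v v) \<subseteq> img h K\<close> C(2) have "C = R" by (rule components_refine_eq)
  then show "\<exists>v\<in>VT. R \<in> components (S2 - img h (\<Delta>v v))" using C(1) v(1) by blast
qed

end
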